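(* Let $d\ge 1$, let $\mathcal{A}\in\mathbb{R}^{n_1\times n_2\times\cdots\times n_d}$, let $p\in\{1,\dots,d\}$, and let $R$ be the number of nonzero $p$-fibers of $\mathcal{A}$. Then $\mathcal{A}$ is equal to a tensor train with TT ranks $r_0=r_d=1$ and $r_k=R$ for $1\le k\le d-1$; that is, there exist cores $\mathcal{G}^{(k)}\in\mathbb{R}^{r_{k-1}\times n_k\times r_k}$, $k=1,\dots,d$, with $$\mathcal{A}(i_1,\dots,i_d)=\mathcal{G}^{(1)}(:,i_1,:)\,\mathcal{G}^{(2)}(:,i_2,:)\cdots\mathcal{G}^{(d)}(:,i_d,:)\quad\text{for all }(i_1,\dots,i_d),$$ such that every core $\mathcal{G}^{(k)}$ with $k\neq p$ has all its entries in $\{0,1\}$ (i.e. $\mathcal{G}^{(k)}\in\{0,1\}^{r_{k-1}\times n_k\times r_k}$), while $\mathcal{G}^{(p)}\in\mathbb{R}^{r_{k-1}\times n_p\times r_p}$ is real-valued.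
   Context: For $p\in\{1,\dots,d\}$, a $p$-fiber of $\mathcal{A}$ is a vector obtained by fixing all indices except the $p$-th: for a fixed multi-index $(i_1,\dots,i_{p-1},i_{p+1},\dots,i_d)$, the vector $\mathcal{A}(i_1,\dots,i_{p-1},:,i_{p+1},\dots,i_d)\in\mathbb{R}^{n_p}$. A $p$-fiber is nonzero if it is not the zero vector. A tensor train (TT) with cores $\mathcal{G}^{(k)}\in\mathbb{R}^{r_{k-1}\times n_k\times r_k}$, $r_0=r_d=1$, represents the tensor whose entries are the products of the matrices $\mathcal{G}^{(k)}(:,i_k,:)\in\mathbb{R}^{r_{k-1}\times r_k}$ as displayed; the $r_k$ are called TT ranks. *)

theory Defs
  imports Complex_Main
begin

text \<open>Modes are numbered 1..d; a multi-index is a function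
  i :: nat => nat with i k < n k for k in {1..d} (0-based entries) and i k = 0
  outside {1..d}. A tensor is a function from multi-indices to reals
  (only its values on valid multi-indices matter).\<close>

definition valid_index :: "nat \<Rightarrow> (nat \<Rightarrow> nat) \<Rightarrow> (nat \<Rightarrow> nat) \<Rightarrow> bool" where
  "valid_index d n i \<longleftrightarrow> (\<forall>k\<in>{1..d}. i k < n k) \<and> (\<forall>k. k \<notin> {1..d} \<longrightarrow> i k = 0)"

text \<open>Index sets of p-fibers: all indices except the p-th fixed
  (the p-th entry normalised to 0).\<close>
definition fiber_index :: "nat \<Rightarrow> (nat \<Rightarrow> nat) \<Rightarrow> nat \<Rightarrow> (nat \<Rightarrow> nat) \<Rightarrow> bool" where
  "fiber_index d n p j \<longleftrightarrow> (\<forall>k\<in>{1..d} - {p}. j k < n k) \<and> (\<forall>k. k \<notin> {1..d} - {p} \<longrightarrow> j k = 0)"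

definition nonzero_fiber :: "((nat \<Rightarrow> nat) \<Rightarrow> real) \<Rightarrow> (nat \<Rightarrow> nat) \<Rightarrow> nat \<Rightarrow> (nat \<Rightarrow> nat) \<Rightarrow> bool" where
  "nonzero_fiber A n p j \<longleftrightarrow> (\<exists>t < n p. A (j(p := t)) \<noteq> 0)"

definition num_nonzero_fibers :: "nat \<Rightarrow> (nat \<Rightarrow> nat) \<Rightarrow> ((nat \<Rightarrow> nat) \<Rightarrow> real) \<Rightarrow> nat \<Rightarrow> nat" where
  "num_nonzero_fibers d n A p = card {j. fiber_index d n p j \<and> nonzero_fiber A n p j}"

text \<open>TT evaluation: cores G k a i b = G^(k)(a, i, b), ranks r.
  tt_row G r x k is the row vector G^(1)(:,x_1,:) ... G^(k)(:,x_k,:) of length r k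
  (tt_row for k = 0 is the 1x1 identity row).\<close>
fun tt_row :: "(nat \<Rightarrow> nat \<Rightarrow> nat \<Rightarrow> nat \<Rightarrow> real) \<Rightarrow> (nat \<Rightarrow> nat) \<Rightarrow> (nat \<Rightarrow> nat) \<Rightarrow> nat \<Rightarrow> nat \<Rightarrow> real" where
  "tt_row G r x 0 b = (if b = 0 then 1 else 0)"
| "tt_row G r x (Suc k) b = (\<Sum>a<r k. tt_row G r x k a * G (Suc k) a (x (Suc k)) b)"

definition tt_eval :: "(nat \<Rightarrow> nat \<Rightarrow> nat \<Rightarrow> nat \<Rightarrow> real) \<Rightarrow> (nat \<Rightarrow> nat) \<Rightarrow> nat \<Rightarrow> (nat \<Rightarrow> nat) \<Rightarrow> real" where
  "tt_eval G r d x = tt_row G r x d 0"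

end

theory Submission
  imports Defs
begin

text \<open>Enumerate the nonzero p-fibers as j_1, ..., j_R. Every entry of A lies in exactly one
  p-fiber, so A is the sum over c of the rank-one tensors whose p-th factor is the fiber
  t \<mapsto> A (j_c(p := t)) and whose other factors are the 0/1 indicators t \<mapsto> [j_c k = t].
  A sum of R rank-one tensors is a tensor train with ranks R and diagonal inner cores, whose
  entries are entries of the factors or 0.\<close>

text \<open>Diagonal cores turning the CP sum over c < R of the products of g k c (x k) into a
  tensor train. For d = 1 the single core is both the first and the last one, so it has to
  contract the rank index itself.\<close>
definition cp_core ::
    "nat \<Rightarrow> nat \<Rightarrow> (nat \<Rightarrow> nat \<Rightarrow> nat \<Rightarrow> real) \<Rightarrow> nat \<Rightarrow> nat \<Rightarrow> nat \<Rightarrow> nat \<Rightarrow> real" where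
  "cp_core R d g k a t b =
     (if k = 1 \<and> k = d then (\<Sum>c<R. g k c t)
      else if k = 1 then g k b t
      else if k = d then g k a t
      else if a = b then g k a t else 0)"

lemma tt_row_cp_core:
  assumes "1 \<le> k" "k < d" "b < R"
    and "r 0 = 1" and ranks: "\<And>k. k \<in> {1..<d} \<Longrightarrow> r k = R"
  shows "tt_row (cp_core R d g) r x k b = (\<Prod>m\<in>{1..k}. g m b (x m))"
  using assms(1,2)
proof (induction k)
  case 0
  then show ?case by simp
next
  case (Suc k)
  show ?case
  proof (cases "k = 0")
    case True
    then show ?thesis using Suc.prems \<open>r 0 = 1\<close> by (simp add: cp_core_def)
  next
    case False
    have "tt_row (cp_core R d g) r x (Suc k) b
        = (\<Sum>a<R. if a = b then tt_row (cp_core R d g) r x k a * g (Suc k) a (x (Suc k)) else 0)"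
      using False Suc.prems ranks by (simp add: cp_core_def if_distrib cong: if_cong)
    also have "\<dots> = tt_row (cp_core R d g) r x k b * g (Suc k) b (x (Suc k))"
      using \<open>b < R\<close> by simp
    also have "\<dots> = (\<Prod>m\<in>{1..Suc k}. g m b (x m))"
      using Suc False by (simp add: atLeastAtMostSuc_conv)
    finally show ?thesis .
  qed
qed

lemma tt_eval_cp_core:
  assumes "d \<ge> 1" "r 0 = 1" and ranks: "\<And>k. k \<in> {1..<d} \<Longrightarrow> r k = R"
  shows "tt_eval (cp_core R d g) r d x = (\<Sum>c<R. \<Prod>m\<in>{1..d}. g m c (x m))"
proof (cases "d = 1")
  case True
  then show ?thesis using assms by (simp add: tt_eval_def cp_core_def)
next
  case False
  then obtain e where d: "d = Suc e" and "e \<ge> 1" using assms(1) by (cases d) auto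
  have "tt_eval (cp_core R d g) r d x
      = (\<Sum>c<R. tt_row (cp_core R d g) r x e c * g d c (x d))"
    using d \<open>e \<ge> 1\<close> ranks by (simp add: tt_eval_def cp_core_def)
  also have "\<dots> = (\<Sum>c<R. (\<Prod>m\<in>{1..e}. g m c (x m)) * g d c (x d))"
    using d \<open>e \<ge> 1\<close> tt_row_cp_core[of e d _ R r g x] assms(2) ranks by simp
  also have "\<dots> = (\<Sum>c<R. \<Prod>m\<in>{1..d}. g m c (x m))"
    using d by (simp add: atLeastAtMostSuc_conv \<open>e \<ge> 1\<close> mult.commute)
  finally show ?thesis .
qed

lemma cp_core_in_01:
  assumes "d \<noteq> 1" "\<And>c. g k c t \<in> {0, 1}"
  shows "cp_core R d g k a t b \<in> {0, 1}"
  using assms by (auto simp: cp_core_def)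

definition fiber_factor :: "((nat \<Rightarrow> nat) \<Rightarrow> real) \<Rightarrow> nat \<Rightarrow> (nat \<Rightarrow> nat) \<Rightarrow> nat \<Rightarrow> nat \<Rightarrow> real" where
  "fiber_factor A p j k t = (if k = p then A (j(p := t)) else of_bool (j k = t))"

lemma finite_fiber_indices: "finite {j. fiber_index d n p j}"
proof (rule finite_subset)
  show "{j. fiber_index d n p j}
      \<subseteq> {j. \<forall>k. (k \<in> {1..d} - {p} \<longrightarrow> j k \<in> (\<Union>k\<in>{1..d}. {..<n k})) \<and> (k \<notin> {1..d} - {p} \<longrightarrow> j k = 0)}"
    by (fastforce simp: fiber_index_def)
qed (intro finite_set_of_finite_funs; simp)

lemma finite_nonzero_fibers: "finite {j. fiber_index d n p j \<and> nonzero_fiber A n p j}"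
  by (rule finite_subset[OF _ finite_fiber_indices]) auto

lemma prod_fiber_factor:
  assumes "p \<in> {1..d}" "valid_index d n x" "fiber_index d n p j"
  shows "(\<Prod>k\<in>{1..d}. fiber_factor A p j k (x k)) = (if j = x(p := 0) then A x else 0)"
proof -
  have j_eq: "j = x(p := 0) \<longleftrightarrow> (\<forall>k\<in>{1..d} - {p}. j k = x k)"
    using assms(2,3) unfolding fiber_index_def valid_index_def fun_eq_iff
    by (metis Diff_iff fun_upd_apply singletonD singletonI)
  have "(\<Prod>k\<in>{1..d}. fiber_factor A p j k (x k))
      = A (j(p := x p)) * (\<Prod>k\<in>{1..d} - {p}. of_bool (j k = x k))"
    using assms(1) by (simp add: prod.remove fiber_factor_def)
  also have "(\<Prod>k\<in>{1..d} - {p}. of_bool (j k = x k) :: real) = of_bool (\<forall>k\<in>{1..d} - {p}. j k = x k)"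
    by (simp add: prod_zero_iff of_bool_def)
  finally show ?thesis
    using j_eq by (auto simp flip: fun_upd_def)
qed

text \<open>The entry A x is carried by the single fiber x(p := 0), which is either nonzero or
  forces A x = 0.\<close>
lemma nonzero_fiber_decomposition:
  assumes "p \<in> {1..d}" "valid_index d n x"
  shows "(\<Sum>j\<in>{j. fiber_index d n p j \<and> nonzero_fiber A n p j}.
            \<Prod>k\<in>{1..d}. fiber_factor A p j k (x k)) = A x"
proof -
  let ?S = "{j. fiber_index d n p j \<and> nonzero_fiber A n p j}"
  have "x(p := 0) \<notin> ?S \<Longrightarrow> A x = 0"
    using assms by (fastforce simp: fiber_index_def valid_index_def nonzero_fiber_def)
  moreover have "(\<Sum>j\<in>?S. \<Prod>k\<in>{1..d}. fiber_factor A p j k (x k))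
      = (\<Sum>j\<in>?S. if j = x(p := 0) then A x else 0)"
    using assms by (intro sum.cong refl prod_fiber_factor) auto
  ultimately show ?thesis
    using finite_nonzero_fibers by (auto simp: sum.delta')
qed

theorem theorem1:
  fixes d p :: nat and n :: "nat \<Rightarrow> nat" and A :: "(nat \<Rightarrow> nat) \<Rightarrow> real"
  assumes "d \<ge> 1" and "p \<in> {1..d}"
  defines "R \<equiv> num_nonzero_fibers d n A p"
  defines "r \<equiv> (\<lambda>k. if k = 0 \<or> k = d then 1 else R)"
  shows "\<exists>G :: nat \<Rightarrow> nat \<Rightarrow> nat \<Rightarrow> nat \<Rightarrow> real.
           (\<forall>x. valid_index d n x \<longrightarrow> A x = tt_eval G r d x) \<and>
           (\<forall>k\<in>{1..d}. k \<noteq> p \<longrightarrow>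
              (\<forall>a < r (k - 1). \<forall>t < n k. \<forall>b < r k. G k a t b \<in> {0, 1}))"
proof -
  let ?S = "{j. fiber_index d n p j \<and> nonzero_fiber A n p j}"
  have "finite ?S"
    by (rule finite_nonzero_fibers)
  moreover have "card ?S = R"
    by (simp add: R_def num_nonzero_fibers_def)
  ultimately obtain f where f: "bij_betw f {..<R} ?S"
    by (metis ex_bij_betw_nat_finite lessThan_atLeast0)
  define g where "g k c t = fiber_factor A p (f c) k t" for k c t
  have "A x = tt_eval (cp_core R d g) r d x" if "valid_index d n x" for x
  proof -
    have "A x = (\<Sum>j\<in>?S. \<Prod>k\<in>{1..d}. fiber_factor A p j k (x k))"
      using nonzero_fiber_decomposition[OF assms(2) that] by simp
    also have "\<dots> = (\<Sum>c<R. \<Prod>k\<in>{1..d}. g k c (x k))"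
      unfolding g_def by (rule sum.reindex_bij_betw[OF f, symmetric])
    also have "\<dots> = tt_eval (cp_core R d g) r d x"
      using assms(1) by (intro tt_eval_cp_core[symmetric]) (auto simp: r_def)
    finally show ?thesis .
  qed
  moreover have "cp_core R d g k a t b \<in> {0, 1}" if "k \<in> {1..d}" "k \<noteq> p" for k a t b
    using that assms(2) by (intro cp_core_in_01) (auto simp: g_def fiber_factor_def)
  ultimately show ?thesis
    by blast
qed

end
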